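(* Let $E$ be a finite-dimensional real affine space and let $G(E)$ be the set of generalized affine functions on $E$, equipped with the topology of pointwise convergence. Then $G(E)$ is sequentially compact: every sequence in $G(E)$ has a subsequence converging pointwise to an element of $G(E)$.
   Context: A generalized affine function on $E$ is a function $E\to\overline{\mathbb{R}}=\mathbb{R}\cup\{\pm\infty\}$ that is both convex and concave (extended-real-valued sense). The topology of pointwise convergence is the subspace topology from the product topology on $\overline{\mathbb{R}}^{E}$. *)

theory Defs
  imports "HOL-Analysis.Analysis" "HOL-Library.Extended_Real"
begin

definition ext_convex :: "('a::real_vector \<Rightarrow> ereal) \<Rightarrow> bool" where
  "ext_convex f \<longleftrightarrow> convex {(x, t::real). f x \<le> ereal t}"

definition ext_concave :: "('a::real_vector \<Rightarrow> ereal) \<Rightarrow> bool" where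
  "ext_concave f \<longleftrightarrow> convex {(x, t::real). ereal t \<le> f x}"

definition generalized_affine :: "('a::real_vector \<Rightarrow> ereal) \<Rightarrow> bool" where
  "generalized_affine f \<longleftrightarrow> ext_convex f \<and> ext_concave f"

end

theory Submission
  imports Defs
begin

(* Induction on the dimension of an affine subspace S of E, proving that some
   subsequence converges at every point of S. A subsequence converges on a countable dense set
   D \<subseteq> S (diagonal argument; the extended reals are compact). Generalized affine functions are
   affine where finite, so if the points of D with finite limit affinely span S, convergence
   spreads to all of S. Otherwise the points of D with limit +\<infinity> and those with limit -\<infinity>
   have disjoint convex hulls (a generalized affine function is concave and convex), a hyperplane
   separates them, and by density every point of S off the hyperplane lies in the convex hull of
   points of D on its side, where the limit is \<plusminus>\<infinity>. The hyperplane meets S in lower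
   dimension. Finally, the epigraph and hypograph conditions pass to pointwise limits. *)

lemma ereal_uminus_le_ereal_uminus_iff [simp]:
  fixes a :: ereal
  shows "- a \<le> ereal (- b) \<longleftrightarrow> ereal b \<le> a" and "ereal (- b) \<le> - a \<longleftrightarrow> a \<le> ereal b"
  by (cases a; simp)+

lemma ext_convexD:
  assumes "ext_convex f" "f x \<le> ereal s" "f y \<le> ereal t" "0 \<le> u" "0 \<le> v" "u + v = 1"
  shows "f (u *\<^sub>R x + v *\<^sub>R y) \<le> ereal (u * s + v * t)"
proof -
  have epi: "convex {(x, t::real). f x \<le> ereal t}"
    using assms(1) by (simp add: ext_convex_def)
  have "u *\<^sub>R (x, s) + v *\<^sub>R (y, t) \<in> {(x, t::real). f x \<le> ereal t}"
    by (rule convexD[OF epi]) (use assms(2-6) in simp_all)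
  then show ?thesis by simp
qed

lemma ext_concave_iff_ext_convex_uminus: "ext_concave f \<longleftrightarrow> ext_convex (\<lambda>x. - f x)"
proof -
  define m where "m p = (fst p, - snd p)" for p :: "'a \<times> real"
  have lin: "linear m" by (simp add: m_def linear_iff)
  have inv: "m ` A = m -` A" for A
  proof
    show "m ` A \<subseteq> m -` A" by (auto simp: m_def)
    show "m -` A \<subseteq> m ` A"
    proof
      fix p assume "p \<in> m -` A"
      then show "p \<in> m ` A" by (intro image_eqI[of p m "m p"]) (auto simp: m_def)
    qed
  qed
  have hypo: "{(x, t). ereal t \<le> f x} = m ` {(x, t). - f x \<le> ereal t}"
    unfolding inv by (auto simp: m_def ereal_uminus_le_reorder)
  have epi: "{(x, t). - f x \<le> ereal t} = m ` {(x, t). ereal t \<le> f x}"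
    unfolding inv by (auto simp: m_def ereal_uminus_le_reorder)
  show ?thesis
    unfolding ext_concave_def ext_convex_def
    using convex_linear_image[OF lin] hypo epi by metis
qed

lemma ext_concaveD:
  assumes "ext_concave f" "ereal s \<le> f x" "ereal t \<le> f y" "0 \<le> u" "0 \<le> v" "u + v = 1"
  shows "ereal (u * s + v * t) \<le> f (u *\<^sub>R x + v *\<^sub>R y)"
proof -
  have "- f (u *\<^sub>R x + v *\<^sub>R y) \<le> ereal (u * (- s) + v * (- t))"
    using ext_convexD[of "\<lambda>x. - f x" x "- s" y "- t" u v] assms
    by (simp add: ext_concave_iff_ext_convex_uminus)
  moreover have "u * (- s) + v * (- t) = - (u * s + v * t)" by simp
  ultimately show ?thesis using ereal_uminus_le_ereal_uminus_iff(1)[of _ "u * s + v * t"] by simp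
qed

lemma ext_convex_le_on_convex_hull:
  assumes "ext_convex f" "\<And>v. v \<in> T \<Longrightarrow> f v \<le> ereal K" "x \<in> convex hull T"
  shows "f x \<le> ereal K"
proof -
  have "convex hull (T \<times> {K}) \<subseteq> {(x, t). f x \<le> ereal t}"
    using assms(1,2) unfolding ext_convex_def by (intro hull_minimal) auto
  moreover have "(x, K) \<in> convex hull (T \<times> {K})"
    using assms(3) by (simp add: convex_hull_Times)
  ultimately show ?thesis by auto
qed

lemma ext_concave_ge_on_convex_hull:
  assumes "ext_concave f" "\<And>v. v \<in> T \<Longrightarrow> ereal K \<le> f v" "x \<in> convex hull T"
  shows "ereal K \<le> f x"
proof -
  have "- f x \<le> ereal (- K)"
    using ext_convex_le_on_convex_hull[of "\<lambda>x. - f x" T "- K" x] assms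
    by (simp add: ext_concave_iff_ext_convex_uminus)
  then show ?thesis by simp
qed

lemma generalized_affine_convex_combination:
  assumes "generalized_affine f" "f x = ereal a" "f y = ereal b" "0 \<le> u" "0 \<le> v" "u + v = 1"
  shows "f (u *\<^sub>R x + v *\<^sub>R y) = ereal (u * a + v * b)"
proof (rule antisym)
  show "f (u *\<^sub>R x + v *\<^sub>R y) \<le> ereal (u * a + v * b)"
    using assms by (intro ext_convexD) (auto simp: generalized_affine_def)
  show "ereal (u * a + v * b) \<le> f (u *\<^sub>R x + v *\<^sub>R y)"
    using assms by (intro ext_concaveD) (auto simp: generalized_affine_def)
qed

text \<open>For \<open>v < 0\<close>, \<open>x\<close> is a convex combination of \<open>z = u x + v y\<close> and \<open>y\<close>,
  so an infinite value at \<open>z\<close> would force an infinite value at \<open>x\<close>.\<close>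

lemma generalized_affine_extrapolation:
  assumes ga: "generalized_affine f" and fx: "f x = ereal a" and fy: "f y = ereal b"
    and uv: "u + v = 1" and v: "v < 0"
  shows "f (u *\<^sub>R x + v *\<^sub>R y) = ereal (u * a + v * b)"
proof -
  define z where "z = u *\<^sub>R x + v *\<^sub>R y"
  have u: "u > 0" using uv v by simp
  have x: "x = (1/u) *\<^sub>R z + (-v/u) *\<^sub>R y"
    using u by (simp add: z_def algebra_simps)
  have w: "0 \<le> 1/u" "0 \<le> -v/u" "1/u + (-v/u) = 1"
    using u v uv by (auto simp: field_simps)
  have cvx: "ext_convex f" and ccv: "ext_concave f"
    using ga by (auto simp: generalized_affine_def)
  have "f z \<noteq> \<infinity>"
  proof
    assume "f z = \<infinity>"
    have "ereal ((1/u) * (u * (a + 1) + v * b) + (-v/u) * b) \<le> f x"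
      unfolding x by (rule ext_concaveD[OF ccv]) (use \<open>f z = \<infinity>\<close> fy w in auto)
    moreover have "(1/u) * (u * (a + 1) + v * b) + (-v/u) * b = a + 1"
      using u by (simp add: field_simps)
    ultimately show False using fx by simp
  qed
  moreover have "f z \<noteq> -\<infinity>"
  proof
    assume "f z = -\<infinity>"
    have "f x \<le> ereal ((1/u) * (u * (a - 1) + v * b) + (-v/u) * b)"
      unfolding x by (rule ext_convexD[OF cvx]) (use \<open>f z = -\<infinity>\<close> fy w in auto)
    moreover have "(1/u) * (u * (a - 1) + v * b) + (-v/u) * b = a - 1"
      using u by (simp add: field_simps)
    ultimately show False using fx by simp
  qed
  ultimately obtain c where fz: "f z = ereal c" by (cases "f z") auto
  have "f x = ereal ((1/u) * c + (-v/u) * b)"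
    unfolding x using generalized_affine_convex_combination[OF ga fz fy w] .
  then have "a = (1/u) * c + (-v/u) * b" using fx by simp
  then have "c = u * a + v * b" using u by (simp add: field_simps)
  then show ?thesis using fz z_def by simp
qed

lemma generalized_affine_affine_combination2:
  assumes ga: "generalized_affine f" and fx: "f x = ereal a" and fy: "f y = ereal b"
    and uv: "u + v = 1"
  shows "f (u *\<^sub>R x + v *\<^sub>R y) = ereal (u * a + v * b)"
proof -
  consider "v < 0" | "u < 0" | "0 \<le> u" "0 \<le> v" by linarith
  then show ?thesis
  proof cases
    case 1
    then show ?thesis using generalized_affine_extrapolation[OF assms] by simp
  next
    case 2
    then show ?thesis
      using generalized_affine_extrapolation[of f y b x a v u] ga fx fy uv by (simp add: add.commute)
  next
    case 3
    then show ?thesis using generalized_affine_convex_combination[OF ga fx fy _ _ uv] by simp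
  qed
qed

lemma generalized_affine_affine_combination:
  assumes ga: "generalized_affine f"
    and "finite s" "s \<noteq> {}" "sum u s = 1" "\<And>v. v \<in> s \<Longrightarrow> f v = ereal (c v)"
  shows "f (\<Sum>v\<in>s. u v *\<^sub>R v) = ereal (\<Sum>v\<in>s. u v * c v)"
  using assms(2-)
proof (induction "card s" arbitrary: s u rule: less_induct)
  case less
  note fin = \<open>finite s\<close> and sum1 = \<open>sum u s = 1\<close> and fc = less.prems(4)
  show ?case
  proof (cases "card s = 1")
    case True
    then obtain a where "s = {a}" by (auto simp: card_Suc_eq)
    then show ?thesis using sum1 fc by simp
  next
    case False
    have "card s > 0" using fin \<open>s \<noteq> {}\<close> by (simp add: card_gt_0_iff)
    then have card2: "card s \<ge> 2" using False by linarith
    have "\<exists>b\<in>s. u b \<noteq> 1"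
    proof (rule ccontr)
      assume "\<not> (\<exists>b\<in>s. u b \<noteq> 1)"
      then have "sum u s = real (card s)" by simp
      then show False using sum1 card2 by simp
    qed
    then obtain b where b: "b \<in> s" "u b \<noteq> 1" by blast
    define s' where "s' = s - {b}"
    define w where "w v = u v / (1 - u b)" for v
    have nz: "1 - u b \<noteq> 0" using b by simp
    have "card s' = card s - 1" using b fin by (simp add: s'_def)
    then have "card s' < card s" "s' \<noteq> {}" using card2 by auto
    moreover have "sum w s' = 1"
      using sum1 sum.remove[OF fin b(1), of u] nz
      by (simp add: s'_def w_def sum_divide_distrib[symmetric] field_simps)
    ultimately have IH: "f (\<Sum>v\<in>s'. w v *\<^sub>R v) = ereal (\<Sum>v\<in>s'. w v * c v)"
      using less.hyps fin fc by (auto simp: s'_def)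
    have "(\<Sum>v\<in>s. u v *\<^sub>R v) = u b *\<^sub>R b + (1 - u b) *\<^sub>R (\<Sum>v\<in>s'. w v *\<^sub>R v)"
      using sum.remove[OF fin b(1), of "\<lambda>v. u v *\<^sub>R v"] nz
      by (simp add: s'_def w_def scaleR_sum_right)
    moreover have "(\<Sum>v\<in>s. u v * c v) = u b * c b + (1 - u b) * (\<Sum>v\<in>s'. w v * c v)"
      using sum.remove[OF fin b(1), of "\<lambda>v. u v * c v"] nz
      by (simp add: s'_def w_def sum_distrib_left)
    ultimately show ?thesis
      using generalized_affine_affine_combination2[OF ga fc[OF b(1)] IH] by simp
  qed
qed

lemma ext_convex_pointwise_limit:
  assumes cvx: "\<And>i. ext_convex (f i)" and lim: "\<And>x. ((\<lambda>i. f i x) \<longlongrightarrow> g x) F"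
    and "F \<noteq> bot"
  shows "ext_convex g"
  unfolding ext_convex_def convex_def
proof clarsimp
  fix x s y t and u v :: real
  assume gx: "g x \<le> ereal s" and gy: "g y \<le> ereal t"
    and uv: "0 \<le> u" "0 \<le> v" "u + v = 1"
  show "g (u *\<^sub>R x + v *\<^sub>R y) \<le> ereal (u * s + v * t)"
  proof (rule ereal_le_epsilon2)
    fix e :: real assume "0 < e"
    then have "g x < ereal (s + e)" "g y < ereal (t + e)"
      using gx gy by (auto elim: le_less_trans)
    then have "eventually (\<lambda>i. f i x < ereal (s + e)) F" "eventually (\<lambda>i. f i y < ereal (t + e)) F"
      using order_tendstoD(2)[OF lim[of x]] order_tendstoD(2)[OF lim[of y]] by blast+
    then have "eventually (\<lambda>i. f i (u *\<^sub>R x + v *\<^sub>R y) \<le> ereal (u * (s + e) + v * (t + e))) F"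
      by eventually_elim (rule ext_convexD[OF cvx], use uv in auto)
    moreover have "u * (s + e) + v * (t + e) = u * s + v * t + e"
      using uv(3) by (simp add: algebra_simps flip: distrib_left)
    ultimately have "g (u *\<^sub>R x + v *\<^sub>R y) \<le> ereal (u * s + v * t + e)"
      using tendsto_upperbound[OF lim _ \<open>F \<noteq> bot\<close>] by simp
    then show "g (u *\<^sub>R x + v *\<^sub>R y) \<le> ereal (u * s + v * t) + ereal e" by simp
  qed
qed

lemma generalized_affine_pointwise_limit:
  assumes "\<And>i. generalized_affine (f i)" "\<And>x. ((\<lambda>i. f i x) \<longlongrightarrow> g x) F" "F \<noteq> bot"
  shows "generalized_affine g"
  unfolding generalized_affine_def ext_concave_iff_ext_convex_uminus
  using assms
  by (auto intro: ext_convex_pointwise_limit[of f g F] ext_convex_pointwise_limit[of "\<lambda>i x. - f i x" _ F]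
      simp: generalized_affine_def ext_concave_iff_ext_convex_uminus)

lemma compact_UNIV_fun_ereal: "compact (UNIV :: ('i \<Rightarrow> ereal) set)"
proof -
  have "compact_space (product_topology (\<lambda>i::'i. euclidean :: ereal topology) UNIV)"
    unfolding compact_space_product_topology by (simp add: compact_space_def compact_UNIV)
  then show ?thesis
    by (simp add: euclidean_product_topology compact_space_def)
qed

lemma ereal_pointwise_convergent_subseq:
  fixes X :: "nat \<Rightarrow> 'i::countable \<Rightarrow> ereal"
  shows "\<exists>r. strict_mono r \<and> (\<forall>i. convergent (\<lambda>n. X (r n) i))"
proof -
  have "seq_compact (UNIV :: ('i \<Rightarrow> ereal) set)"
    using compact_UNIV_fun_ereal by (simp add: seq_compact_eq_compact)
  then obtain l r where r: "strict_mono r" "(X \<circ> r) \<longlonglongrightarrow> l"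
    by (rule seq_compactE) auto
  then have "\<forall>i. (\<lambda>n. X (r n) i) \<longlonglongrightarrow> l i"
    using limitin_componentwise[of "\<lambda>i. euclidean" UNIV "X \<circ> r" l sequentially]
    by (simp add: euclidean_product_topology)
  with r(1) show ?thesis by (auto intro: convergentI)
qed

lemma ereal_convergent_subseq_on_countable:
  fixes g :: "nat \<Rightarrow> 'a \<Rightarrow> ereal"
  assumes "countable D"
  shows "\<exists>r. strict_mono r \<and> (\<forall>x\<in>D. convergent (\<lambda>n. g (r n) x))"
proof -
  obtain r where "strict_mono r" "\<forall>i. convergent (\<lambda>n. g (r n) (from_nat_into D i))"
    using ereal_pointwise_convergent_subseq[of "\<lambda>n i. g n (from_nat_into D i)"] by blast
  moreover have "x = from_nat_into D (to_nat_on D x)" if "x \<in> D" for x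
    using from_nat_into_to_nat_on[OF assms that] by simp
  ultimately show ?thesis by metis
qed

lemma tendsto_PInfty_on_convex_hull:
  fixes g :: "'i \<Rightarrow> 'a::euclidean_space \<Rightarrow> ereal"
  assumes ccv: "\<And>i. ext_concave (g i)" and lim: "\<And>v. v \<in> T \<Longrightarrow> ((\<lambda>i. g i v) \<longlongrightarrow> \<infinity>) F"
    and x: "x \<in> convex hull T"
  shows "((\<lambda>i. g i x) \<longlongrightarrow> \<infinity>) F"
proof -
  obtain s where s: "finite s" "s \<subseteq> T" "x \<in> convex hull s"
    using x unfolding caratheodory[of T] by auto
  show ?thesis unfolding tendsto_PInfty
  proof
    fix r :: real
    have "eventually (\<lambda>i. \<forall>v\<in>s. ereal (r + 1) < g i v) F"
      using s lim unfolding tendsto_PInfty by (intro eventually_ball_finite) auto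
    then show "eventually (\<lambda>i. ereal r < g i x) F"
    proof eventually_elim
      case (elim i)
      then have "ereal (r + 1) \<le> g i x"
        by (intro ext_concave_ge_on_convex_hull[OF ccv _ s(3)]) (simp add: less_imp_le)
      then show ?case by (rule less_le_trans[rotated]) simp
    qed
  qed
qed

lemma tendsto_MInfty_on_convex_hull:
  fixes g :: "'i \<Rightarrow> 'a::euclidean_space \<Rightarrow> ereal"
  assumes "\<And>i. ext_convex (g i)" "\<And>v. v \<in> T \<Longrightarrow> ((\<lambda>i. g i v) \<longlongrightarrow> -\<infinity>) F"
    and "x \<in> convex hull T"
  shows "((\<lambda>i. g i x) \<longlongrightarrow> -\<infinity>) F"
proof -
  have "ext_concave (\<lambda>x. - g i x)" for i
    using assms(1) by (simp add: ext_concave_iff_ext_convex_uminus)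
  moreover have "((\<lambda>i. - g i v) \<longlongrightarrow> \<infinity>) F" if "v \<in> T" for v
    using tendsto_uminus_ereal[OF assms(2)[OF that]] by simp
  ultimately have "((\<lambda>i. - g i x) \<longlongrightarrow> \<infinity>) F"
    using assms(3) by (rule tendsto_PInfty_on_convex_hull)
  then show ?thesis using tendsto_uminus_ereal[of "\<lambda>i. - g i x" \<infinity> F] by simp
qed

lemma affine_Int_open_subset_closure:
  fixes S H D U :: "'a::euclidean_space set"
  assumes S: "affine S" and H: "affine H" "\<not> S \<subseteq> H" and D: "S \<subseteq> closure D" and U: "open U"
  shows "S \<inter> U \<subseteq> closure (D \<inter> U - H)"
proof
  fix y assume y: "y \<in> S \<inter> U"
  show "y \<in> closure (D \<inter> U - H)" unfolding closure_iff_nhds_not_empty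
  proof (intro allI impI)
    fix A V assume V: "V \<subseteq> A" "open V" "y \<in> V"
    have "affine hull (S \<inter> (V \<inter> U)) = affine hull S"
      using y V U by (intro affine_hull_affine_Int_open[OF S]) auto
    have "\<not> S \<inter> (V \<inter> U) \<subseteq> H"
    proof
      assume "S \<inter> (V \<inter> U) \<subseteq> H"
      then have "affine hull (S \<inter> (V \<inter> U)) \<subseteq> H" using H(1) by (intro hull_minimal)
      with \<open>affine hull (S \<inter> (V \<inter> U)) = affine hull S\<close> show False
        using hull_same[of affine S] S H(2) by simp
    qed
    then obtain w where w: "w \<in> S" "w \<in> V \<inter> U - H" by blast
    have "open (V \<inter> U - H)" using V(2) U H(1) by (intro open_Diff affine_closed) auto
    then have "(V \<inter> U - H) \<inter> D \<noteq> {}"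
      using w D open_Int_closure_eq_empty[of "V \<inter> U - H" D] by auto
    then show "(D \<inter> U - H) \<inter> A \<noteq> {}" using V(1) by auto
  qed
qed

text \<open>A point of \<open>S \<inter> U\<close> is in the relative interior of the closed convex set
  \<open>closure (convex hull T)\<close>, and the relative interior of a convex set is that of its closure.\<close>

lemma affine_Int_open_subset_convex_hull:
  fixes S T U :: "'a::euclidean_space set"
  assumes S: "affine S" and T: "T \<subseteq> S" and U: "open U" and dense: "S \<inter> U \<subseteq> closure T"
  shows "S \<inter> U \<subseteq> convex hull T"
proof
  fix x assume x: "x \<in> S \<inter> U"
  define C where "C = closure (convex hull T)"
  have "convex hull T \<subseteq> S"
    using T affine_imp_convex[OF S] by (intro hull_minimal) auto
  then have "C \<subseteq> S"
    unfolding C_def by (rule closure_minimal[OF _ affine_closed[OF S]])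
  then have "affine hull C \<subseteq> S" using S by (intro hull_minimal) auto
  moreover have "closure T \<subseteq> C"
    unfolding C_def by (intro closure_mono hull_subset)
  ultimately have "U \<inter> affine hull C \<subseteq> C" using dense by auto
  moreover have "x \<in> U \<inter> C" using x dense \<open>closure T \<subseteq> C\<close> by auto
  ultimately have "x \<in> rel_interior C" unfolding mem_rel_interior using U by blast
  then have "x \<in> rel_interior (convex hull T)"
    unfolding C_def by (simp add: convex_rel_interior_closure)
  then show "x \<in> convex hull T" using rel_interior_subset by blast
qed

lemma affine_Int_open_subset_convex_hull_dense:
  fixes S H D U :: "'a::euclidean_space set"
  assumes "affine S" "affine H" "\<not> S \<subseteq> H" "D \<subseteq> S" "S \<subseteq> closure D" "open U"
  shows "S \<inter> U \<subseteq> convex hull (D \<inter> U - H)"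
  using assms
  by (intro affine_Int_open_subset_convex_hull affine_Int_open_subset_closure) auto

lemma span_differences_in_affine:
  fixes S X Y :: "'a::euclidean_space set"
  assumes S: "affine S" "p \<in> S" and "X \<subseteq> S" "Y \<subseteq> S"
    and a: "a \<in> span (\<Union>x\<in>X. \<Union>y\<in>Y. {x - y})"
  shows "p + a \<in> S"
proof -
  define V where "V = (\<lambda>x. x - p) ` S"
  have V: "subspace V" unfolding V_def by (rule affine_diffs_subspace_subtract[OF S])
  have "(\<Union>x\<in>X. \<Union>y\<in>Y. {x - y}) \<subseteq> V"
  proof clarify
    fix x y assume "x \<in> X" "y \<in> Y"
    then have "x - p \<in> V" "y - p \<in> V" using assms(3,4) by (auto simp: V_def)
    then have "(x - p) - (y - p) \<in> V" using subspace_diff[OF V] by blast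
    then show "x - y \<in> V" by simp
  qed
  then have "a \<in> V" using a span_minimal[OF _ V] by blast
  then show ?thesis by (auto simp: V_def)
qed

text \<open>The normal vector is chosen in the direction space of \<open>S\<close>, so that the
  hyperplane does not contain \<open>S\<close>.\<close>

lemma separating_hyperplane_in_affine:
  fixes S P M :: "'a::euclidean_space set"
  assumes S: "affine S" "S \<noteq> {}" and PS: "P \<subseteq> S" and MS: "M \<subseteq> S"
    and disj: "convex hull P \<inter> convex hull M = {}"
  obtains a b where "\<And>v. v \<in> P \<Longrightarrow> b \<le> a \<bullet> v" "\<And>v. v \<in> M \<Longrightarrow> a \<bullet> v \<le> b"
    "\<not> S \<subseteq> {x. a \<bullet> x = b}"
proof -
  consider "P = {}" | "M = {}" | "P \<noteq> {}" "M \<noteq> {}" by blast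
  then show ?thesis
  proof cases
    case 1
    then show ?thesis using S(2) by (intro that[of 1 0]) auto
  next
    case 2
    then show ?thesis using S(2) by (intro that[of "-1" 0]) auto
  next
    case 3
    define A where "A = (\<Union>x\<in>convex hull P. \<Union>y\<in>convex hull M. {x - y})"
    have "convex A" unfolding A_def by (intro convex_differences convex_convex_hull)
    moreover have "A \<noteq> {}" using 3 by (auto simp: A_def)
    moreover have "0 \<notin> A" using disj by (auto simp: A_def)
    ultimately obtain a where a: "a \<in> span A" "a \<noteq> 0" "\<And>z. z \<in> A \<Longrightarrow> 0 \<le> a \<bullet> z"
      using separating_hyperplane_set_0_inspan by blast
    have sep: "a \<bullet> y \<le> a \<bullet> x" if "x \<in> P" "y \<in> M" for x y
    proof -
      have "x - y \<in> A" using that by (auto simp: A_def intro: hull_inc)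
      then show ?thesis using a(3)[of "x - y"] by (simp add: inner_diff_right)
    qed
    obtain q where q: "q \<in> M" using 3 by blast
    define b where "b = Inf ((\<bullet>) a ` P)"
    have "bdd_below ((\<bullet>) a ` P)" using sep[OF _ q] by (intro bdd_belowI[of _ "a \<bullet> q"]) auto
    then have b1: "b \<le> a \<bullet> v" if "v \<in> P" for v
      unfolding b_def using that by (intro cInf_lower) auto
    have b2: "a \<bullet> v \<le> b" if "v \<in> M" for v
      unfolding b_def using 3 that sep by (intro cInf_greatest) auto
    obtain p where pS: "p \<in> S" using S(2) by blast
    have "convex hull P \<subseteq> S" "convex hull M \<subseteq> S"
      using PS MS affine_imp_convex[OF S(1)] by (simp_all add: hull_minimal)
    then have "p + a \<in> S"
      using span_differences_in_affine[OF S(1) pS] a(1) by (simp add: A_def)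
    moreover have "a \<bullet> (p + a) \<noteq> a \<bullet> p" using a(2) by (simp add: inner_add_right)
    ultimately have "\<not> S \<subseteq> {x. a \<bullet> x = b}" using pS by auto
    with b1 b2 show ?thesis by (rule that)
  qed
qed

lemma generalized_affine_convergent_on_affine_hull:
  fixes g :: "nat \<Rightarrow> 'a::real_vector \<Rightarrow> ereal"
  assumes ga: "\<And>n. generalized_affine (g n)"
    and lim: "\<And>v. v \<in> F \<Longrightarrow> (\<lambda>n. g n v) \<longlonglongrightarrow> ereal (c v)"
    and x: "x \<in> affine hull F"
  shows "convergent (\<lambda>n. g n x)"
proof -
  obtain s u where s: "finite s" "s \<noteq> {}" "s \<subseteq> F" "sum u s = 1" "x = (\<Sum>v\<in>s. u v *\<^sub>R v)"
    using x unfolding affine_hull_explicit by blast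
  have "eventually (\<lambda>n. g n v = ereal (real_of_ereal (g n v))) sequentially" if "v \<in> s" for v
  proof -
    have l: "(\<lambda>n. g n v) \<longlonglongrightarrow> ereal (c v)" using lim that s(3) by auto
    have "eventually (\<lambda>n. -\<infinity> < g n v) sequentially" by (rule order_tendstoD(1)[OF l]) simp
    moreover have "eventually (\<lambda>n. g n v < \<infinity>) sequentially" by (rule order_tendstoD(2)[OF l]) simp
    ultimately show ?thesis
    proof eventually_elim
      case (elim n)
      then show ?case by (cases "g n v") auto
    qed
  qed
  then have "eventually (\<lambda>n. \<forall>v\<in>s. g n v = ereal (real_of_ereal (g n v))) sequentially"
    by (intro eventually_ball_finite[OF s(1)]) blast
  then have "eventually (\<lambda>n. ereal (\<Sum>v\<in>s. u v * real_of_ereal (g n v)) = g n x) sequentially"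
  proof eventually_elim
    case (elim n)
    then show ?case
      using s(5) generalized_affine_affine_combination[OF ga s(1,2,4),
          where c = "\<lambda>v. real_of_ereal (g n v)"]
      by simp
  qed
  moreover have
    "(\<lambda>n. ereal (\<Sum>v\<in>s. u v * real_of_ereal (g n v))) \<longlonglongrightarrow> ereal (\<Sum>v\<in>s. u v * c v)"
    using lim s(3) by (intro tendsto_intros lim_real_of_ereal) auto
  ultimately show ?thesis
    by (blast intro: convergentI Lim_transform_eventually)
qed

lemma generalized_affine_convergent_off_hyperplane:
  fixes g :: "nat \<Rightarrow> 'a::euclidean_space \<Rightarrow> ereal"
  assumes S: "affine S" and D: "D \<subseteq> S" "S \<subseteq> closure D"
    and ga: "\<And>n. generalized_affine (g n)"
    and lim: "\<And>v. v \<in> D \<Longrightarrow> (\<lambda>n. g n v) \<longlonglongrightarrow> h v"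
    and span: "\<not> S \<subseteq> affine hull {v \<in> D. h v \<in> range ereal}"
  obtains a b where "\<not> S \<subseteq> {x. a \<bullet> x = b}"
    "\<And>x. x \<in> S \<Longrightarrow> a \<bullet> x \<noteq> b \<Longrightarrow> convergent (\<lambda>n. g n x)"
proof -
  define H where "H = affine hull {v \<in> D. h v \<in> range ereal}"
  define P where "P = {v \<in> D. h v = \<infinity>}"
  define M where "M = {v \<in> D. h v = -\<infinity>}"
  have toP: "(\<lambda>n. g n x) \<longlonglongrightarrow> \<infinity>" if "x \<in> convex hull P" for x
  proof (rule tendsto_PInfty_on_convex_hull[OF _ _ that])
    show "ext_concave (g n)" for n using ga by (simp add: generalized_affine_def)
    show "(\<lambda>n. g n v) \<longlonglongrightarrow> \<infinity>" if "v \<in> P" for v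
      using lim[of v] that by (simp add: P_def)
  qed
  have toM: "(\<lambda>n. g n x) \<longlonglongrightarrow> -\<infinity>" if "x \<in> convex hull M" for x
  proof (rule tendsto_MInfty_on_convex_hull[OF _ _ that])
    show "ext_convex (g n)" for n using ga by (simp add: generalized_affine_def)
    show "(\<lambda>n. g n v) \<longlonglongrightarrow> -\<infinity>" if "v \<in> M" for v
      using lim[of v] that by (simp add: M_def)
  qed
  have "S \<noteq> {}" using span by auto
  moreover have "P \<subseteq> S" "M \<subseteq> S" using D(1) by (auto simp: P_def M_def)
  moreover have "convex hull P \<inter> convex hull M = {}"
    using LIMSEQ_unique[OF toP toM] MInfty_neq_PInfty(1) by blast
  ultimately obtain a b where
    ab: "\<And>v. v \<in> P \<Longrightarrow> b \<le> a \<bullet> v" "\<And>v. v \<in> M \<Longrightarrow> a \<bullet> v \<le> b"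
      "\<not> S \<subseteq> {x. a \<bullet> x = b}"
    by (rule separating_hyperplane_in_affine[OF S]) (rule that)
  have "{v \<in> D. h v \<in> range ereal} \<subseteq> H" unfolding H_def by (rule hull_subset)
  have DH: "D - H \<subseteq> P \<union> M"
  proof
    fix v assume v: "v \<in> D - H"
    then have "h v \<notin> range ereal" using \<open>{v \<in> D. h v \<in> range ereal} \<subseteq> H\<close> by blast
    then show "v \<in> P \<union> M" using v by (cases "h v") (auto simp: P_def M_def)
  qed
  have side: "S \<inter> U \<subseteq> convex hull (D \<inter> U - H)" if "open U" for U
    using S _ _ D that unfolding H_def
    by (rule affine_Int_open_subset_convex_hull_dense) (use span in auto)
  have "convergent (\<lambda>n. g n x)" if x: "x \<in> S" "a \<bullet> x \<noteq> b" for x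
  proof (cases "b < a \<bullet> x")
    case True
    have "D \<inter> {v. b < a \<bullet> v} - H \<subseteq> P" using DH ab(2) by fastforce
    moreover have "x \<in> convex hull (D \<inter> {v. b < a \<bullet> v} - H)"
      using side[OF open_halfspace_gt] x(1) True by blast
    ultimately have "x \<in> convex hull P" using hull_mono by blast
    then show ?thesis using toP by (blast intro: convergentI)
  next
    case False
    then have "a \<bullet> x < b" using x(2) by simp
    have "D \<inter> {v. a \<bullet> v < b} - H \<subseteq> M" using DH ab(1) by fastforce
    moreover have "x \<in> convex hull (D \<inter> {v. a \<bullet> v < b} - H)"
      using side[OF open_halfspace_lt] x(1) \<open>a \<bullet> x < b\<close> by blast
    ultimately have "x \<in> convex hull M" using hull_mono by blast
    then show ?thesis using toM by (blast intro: convergentI)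
  qed
  with ab(3) show ?thesis by (rule that)
qed

lemma aff_dim_affine_Int_hyperplane_less:
  fixes S :: "'a::euclidean_space set"
  assumes "affine S" "\<not> S \<subseteq> {x. a \<bullet> x = b}"
  shows "aff_dim (S \<inter> {x. a \<bullet> x = b}) < aff_dim S"
proof -
  have "S \<noteq> {}" using assms(2) by auto
  then have "0 \<le> aff_dim S" using aff_dim_negative_iff[of S] by linarith
  then show ?thesis using aff_dim_affine_Int_hyperplane[OF assms(1), of a b] assms(2) by auto
qed

lemma generalized_affine_convergent_subseq_on_affine:
  fixes f :: "nat \<Rightarrow> 'a::euclidean_space \<Rightarrow> ereal"
  assumes "affine S" "\<And>n. generalized_affine (f n)"
  shows "\<exists>r. strict_mono r \<and> (\<forall>x\<in>S. convergent (\<lambda>n. f (r n) x))"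
  using assms
proof (induction "nat (aff_dim S + 1)" arbitrary: S f rule: less_induct)
  case less
  note S = \<open>affine S\<close> and ga = \<open>\<And>n. generalized_affine (f n)\<close>
  obtain D where D: "countable D" "D \<subseteq> S" "S \<subseteq> closure D" using separable by blast
  obtain r1 where r1: "strict_mono r1" "\<forall>x\<in>D. convergent (\<lambda>n. f (r1 n) x)"
    using ereal_convergent_subseq_on_countable[OF D(1)] by blast
  define g where "g n = f (r1 n)" for n
  define h where "h v = lim (\<lambda>n. g n v)" for v
  have gag: "generalized_affine (g n)" for n using ga by (simp add: g_def)
  have lim: "(\<lambda>n. g n v) \<longlonglongrightarrow> h v" if "v \<in> D" for v
    using r1(2) that by (simp add: g_def h_def convergent_LIMSEQ_iff)
  define F where "F = {v \<in> D. h v \<in> range ereal}"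
  show ?case
  proof (cases "S \<subseteq> affine hull F")
    case True
    have "(\<lambda>n. g n v) \<longlonglongrightarrow> ereal (real_of_ereal (h v))" if "v \<in> F" for v
      using lim[of v] that by (cases "h v") (auto simp: F_def)
    then have "convergent (\<lambda>n. g n x)" if "x \<in> S" for x
      using that True by (intro generalized_affine_convergent_on_affine_hull[OF gag, where F = F]) auto
    then show ?thesis using r1(1) by (auto simp: g_def)
  next
    case False
    then obtain a b where ab: "\<not> S \<subseteq> {x. a \<bullet> x = b}"
      "\<And>x. x \<in> S \<Longrightarrow> a \<bullet> x \<noteq> b \<Longrightarrow> convergent (\<lambda>n. g n x)"
      using generalized_affine_convergent_off_hyperplane[OF S D(2,3) gag lim] unfolding F_def by blast
    define L where "L = S \<inter> {x. a \<bullet> x = b}"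
    have "aff_dim L < aff_dim S"
      unfolding L_def using S ab(1) by (rule aff_dim_affine_Int_hyperplane_less)
    then have "nat (aff_dim L + 1) < nat (aff_dim S + 1)"
      using aff_dim_geq[of L] by linarith
    moreover have "affine L" unfolding L_def using S by (intro affine_Int affine_hyperplane)
    ultimately obtain r2 where r2: "strict_mono r2" "\<forall>x\<in>L. convergent (\<lambda>n. g (r2 n) x)"
      using less.hyps gag by blast
    have "convergent (\<lambda>n. g (r2 n) x)" if "x \<in> S" for x
    proof (cases "a \<bullet> x = b")
      case True
      then show ?thesis using r2(2) that by (auto simp: L_def)
    next
      case False
      then show ?thesis
        using convergent_subseq_convergent[OF ab(2)[OF that] r2(1)] by (simp add: o_def)
    qed
    moreover have "strict_mono (r1 \<circ> r2)" using r1(1) r2(1) by (rule strict_mono_o)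
    ultimately show ?thesis by (auto simp: g_def)
  qed
qed

theorem corollary1:
  fixes f :: "nat \<Rightarrow> 'a::euclidean_space \<Rightarrow> ereal"
  assumes "\<And>n. generalized_affine (f n)"
  shows "\<exists>r g. strict_mono r \<and> generalized_affine g \<and>
           (\<forall>x. (\<lambda>n. f (r n) x) \<longlonglongrightarrow> g x)"
proof -
  have "\<exists>r. strict_mono r \<and> (\<forall>x\<in>UNIV. convergent (\<lambda>n. f (r n) x))"
    using affine_UNIV assms by (rule generalized_affine_convergent_subseq_on_affine)
  then obtain r where r: "strict_mono r" "\<forall>x. convergent (\<lambda>n. f (r n) x)" by blast
  define g where "g x = lim (\<lambda>n. f (r n) x)" for x
  have lim: "(\<lambda>n. f (r n) x) \<longlonglongrightarrow> g x" for x
    using r(2) by (simp add: g_def convergent_LIMSEQ_iff)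
  then have "generalized_affine g"
    using assms by (intro generalized_affine_pointwise_limit[of "\<lambda>n. f (r n)" g sequentially]) auto
  with r(1) lim show ?thesis by blast
qed

end
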